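(* Let $p\neq 2$ be a prime and $G=Z_{p^{\lambda_1}}\times\cdots\times Z_{p^{\lambda_n}}$ with $0<\lambda_1<\cdots<\lambda_n$. Let $i\in\{1,\dots,n\}$, $j\in\{1,\dots,\lambda_i\}$, and write $J(i,j)=R(\mathbf a)$ as in its definition. Then the number of elements of $J(G)$ contained in $J(i,j)$ is $\sum_{k=1}^n a_k$.
   Context: Tuples are ordered componentwise; for $\mathbf 0\le\mathbf a\le(\lambda_1,\dots,\lambda_n)$, $T(\mathbf a)$ is the set of $(g_1,\dots,g_n)\in G$ with $|g_i|=p^{a_i}$, and $R(\mathbf a)=\bigcup_{\mathbf b\le\mathbf a}T(\mathbf b)$. For $i\in\{1,\dots,n\}$ and $j\in\{1,\dots,\lambda_i\}$, $J(i,j)=R(\mathbf a)$ where $a_k=j$ for $k\ge i$ and $a_k=\max\{0,\,j-(\lambda_i-\lambda_k)\}$ for $k<i$. $J(G)$ is the set of all $J(i,j)$, partially ordered by inclusion. *)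

theory Defs
  imports "HOL-Computational_Algebra.Primes"
begin

text \<open>The group G = Z_{p^lam_1} x ... x Z_{p^lam_n}: tuples indexed by 1..n,
  with g k in {0..<p^lam k}, and g k = 0 outside 1..n (extensional).\<close>
definition Gcar :: "nat \<Rightarrow> nat \<Rightarrow> (nat \<Rightarrow> nat) \<Rightarrow> (nat \<Rightarrow> nat) set" where
  "Gcar p n lam = {g. (\<forall>k\<in>{1..n}. g k < p ^ lam k) \<and> (\<forall>k. k \<notin> {1..n} \<longrightarrow> g k = 0)}"

definition cyc_ord :: "nat \<Rightarrow> nat \<Rightarrow> nat" where
  "cyc_ord m x = (LEAST d. 0 < d \<and> m dvd d * x)"

definition Tset :: "nat \<Rightarrow> nat \<Rightarrow> (nat \<Rightarrow> nat) \<Rightarrow> (nat \<Rightarrow> nat) \<Rightarrow> (nat \<Rightarrow> nat) set" where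
  "Tset p n lam a = {g \<in> Gcar p n lam. \<forall>k\<in>{1..n}. cyc_ord (p ^ lam k) (g k) = p ^ a k}"

definition Rset :: "nat \<Rightarrow> nat \<Rightarrow> (nat \<Rightarrow> nat) \<Rightarrow> (nat \<Rightarrow> nat) \<Rightarrow> (nat \<Rightarrow> nat) set" where
  "Rset p n lam a = (\<Union> b \<in> {b. \<forall>k\<in>{1..n}. b k \<le> a k}. Tset p n lam b)"

definition Jvec :: "(nat \<Rightarrow> nat) \<Rightarrow> nat \<Rightarrow> nat \<Rightarrow> nat \<Rightarrow> nat" where
  "Jvec lam i j k = (if i \<le> k then j
      else nat (max 0 (int j - (int (lam i) - int (lam k)))))"

definition Jset :: "nat \<Rightarrow> nat \<Rightarrow> (nat \<Rightarrow> nat) \<Rightarrow> nat \<Rightarrow> nat \<Rightarrow> (nat \<Rightarrow> nat) set" where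
  "Jset p n lam i j = Rset p n lam (Jvec lam i j)"

definition JG :: "nat \<Rightarrow> nat \<Rightarrow> (nat \<Rightarrow> nat) \<Rightarrow> (nat \<Rightarrow> nat) set set" where
  "JG p n lam = {Jset p n lam i j | i j. i \<in> {1..n} \<and> j \<in> {1..lam i}}"

end

theory Submission
  imports Defs
begin

text \<open>For \<open>1 \<le> e \<le> L\<close> the element \<open>p^(L-e)\<close> of \<open>Z_{p^L}\<close> has order \<open>p^e\<close>, so every
  exponent tuple \<open>a \<le> \<lambda>\<close> is realised by some element of \<open>G\<close> and \<open>T(a)\<close> is nonempty.
  Since the \<open>T(a)\<close> are pairwise disjoint, \<open>R(a) \<subseteq> R(b)\<close> holds exactly when \<open>a \<le> b\<close>;
  in particular \<open>(i,j) \<mapsto> J(i,j)\<close> is injective (here the strict monotonicity of \<open>\<lambda>\<close> enters).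
  Comparing the exponent tuples shows \<open>J(k,j') \<subseteq> J(i,j)\<close> iff \<open>j' \<le> a\<^sub>k\<close>, where \<open>a\<close> is
  the tuple of \<open>J(i,j)\<close>, so the members of \<open>J(G)\<close> below \<open>J(i,j)\<close> are counted by \<open>\<Sum>\<^sub>k a\<^sub>k\<close>.\<close>

lemma cyc_ord_zero: "cyc_ord m 0 = 1"
  unfolding cyc_ord_def by (intro Least_equality) auto

lemma cyc_ord_mult_self:
  assumes "0 < m" and "0 < d"
  shows "cyc_ord (m * d) d = m"
  unfolding cyc_ord_def
proof (intro Least_equality conjI)
  show "0 < m" "m * d dvd m * d" by (simp_all add: assms(1))
next
  fix y assume "0 < y \<and> m * d dvd y * d"
  then show "m \<le> y" using assms(2) by (auto intro: dvd_imp_le)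
qed

lemma Tset_nonempty:
  assumes p: "1 < p" and a: "\<forall>k\<in>{1..n}. a k \<le> lam k"
  shows "Tset p n lam a \<noteq> {}"
proof -
  define g where "g k = (if k \<in> {1..n} \<and> 0 < a k then p ^ (lam k - a k) else 0)" for k
  have ord: "g k < p ^ lam k \<and> cyc_ord (p ^ lam k) (g k) = p ^ a k" if k: "k \<in> {1..n}" for k
  proof (cases "a k = 0")
    case True
    then show ?thesis using p by (simp add: g_def cyc_ord_zero)
  next
    case False
    have "a k \<le> lam k" using a k by blast
    then have split: "p ^ lam k = p ^ a k * p ^ (lam k - a k)"
      by (simp flip: power_add)
    have "lam k - a k < lam k" using \<open>a k \<le> lam k\<close> False by linarith
    moreover have "1 < p ^ a k" using one_less_power[OF p] False by simp
    ultimately show ?thesis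
      using k False p by (simp add: g_def split cyc_ord_mult_self power_strict_increasing)
  qed
  have "g \<in> Tset p n lam a"
    using ord unfolding Tset_def Gcar_def by (auto simp: g_def)
  then show ?thesis by blast
qed

lemma Tset_exponent_unique:
  assumes "1 < p" and "g \<in> Tset p n lam a" and "g \<in> Tset p n lam b" and "k \<in> {1..n}"
  shows "a k = b k"
proof -
  have "p ^ a k = p ^ b k" using assms(2-4) unfolding Tset_def by auto
  then show ?thesis using assms(1) by simp
qed

lemma Rset_subset_iff:
  assumes p: "1 < p" and a: "\<forall>k\<in>{1..n}. a k \<le> lam k"
  shows "Rset p n lam a \<subseteq> Rset p n lam b \<longleftrightarrow> (\<forall>k\<in>{1..n}. a k \<le> b k)"
proof
  assume sub: "Rset p n lam a \<subseteq> Rset p n lam b"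
  obtain g where g: "g \<in> Tset p n lam a" using Tset_nonempty[OF p a] by blast
  then have "g \<in> Rset p n lam b" using sub unfolding Rset_def by blast
  then obtain c where c: "\<forall>k\<in>{1..n}. c k \<le> b k" and "g \<in> Tset p n lam c"
    unfolding Rset_def by blast
  then show "\<forall>k\<in>{1..n}. a k \<le> b k"
    using Tset_exponent_unique[OF p g] by fastforce
qed (auto simp: Rset_def intro: order_trans)

lemma Jvec_above: "i \<le> k \<Longrightarrow> Jvec lam i j k = j"
  by (simp add: Jvec_def)

lemma Jvec_self [simp]: "Jvec lam i j i = j"
  by (simp add: Jvec_above)

lemma Jvec_le_lam:
  assumes "mono_on {1..n} lam" and "i \<in> {1..n}" and "j \<le> lam i" and "k \<in> {1..n}"
  shows "Jvec lam i j k \<le> lam k"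
proof (cases "i \<le> k")
  case True
  then show ?thesis using assms mono_onD[OF assms(1), of i k] by (simp add: Jvec_def)
next
  case False
  then show ?thesis using assms mono_onD[OF assms(1), of k i] by (simp add: Jvec_def)
qed

lemma Jvec_le_Jvec_iff:
  assumes mono: "mono_on {1..n} lam"
    and i: "i \<in> {1..n}" and k: "k \<in> {1..n}" and j': "1 \<le> j'"
  shows "(\<forall>l\<in>{1..n}. Jvec lam k j' l \<le> Jvec lam i j l) \<longleftrightarrow> j' \<le> Jvec lam i j k"
proof -
  have mono': "x \<le> y \<Longrightarrow> lam x \<le> lam y" if "x \<in> {1..n}" "y \<in> {1..n}" for x y
    using mono_onD[OF mono] that by blast
  show ?thesis
  proof
    assume "\<forall>l\<in>{1..n}. Jvec lam k j' l \<le> Jvec lam i j l"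
    then show "j' \<le> Jvec lam i j k" using k by force
  next
    assume le: "j' \<le> Jvec lam i j k"
    show "\<forall>l\<in>{1..n}. Jvec lam k j' l \<le> Jvec lam i j l"
    proof
      fix l assume l: "l \<in> {1..n}"
      show "Jvec lam k j' l \<le> Jvec lam i j l"
        using le j' mono'[OF i k] mono'[OF k i] mono'[OF k l] mono'[OF l k] mono'[OF l i] mono'[OF i l]
        unfolding Jvec_def by (auto split: if_splits)
    qed
  qed
qed

lemma Jvec_below_lt:
  assumes "strict_mono_on {1..n} lam" and "k \<in> {1..n}" and "i \<in> {1..n}" and "k < i"
    and "1 \<le> j"
  shows "Jvec lam i j k < j"
  using assms strict_mono_onD[OF assms(1), of k i] by (simp add: Jvec_def)

lemma Jvec_inj:
  assumes mono: "strict_mono_on {1..n} lam"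
    and i: "i \<in> {1..n}" "i' \<in> {1..n}" and j: "1 \<le> j" "1 \<le> j'"
    and eq: "\<forall>k\<in>{1..n}. Jvec lam i j k = Jvec lam i' j' k"
  shows "i = i' \<and> j = j'"
proof -
  have False if "k < k'" "k \<in> {1..n}" "k' \<in> {1..n}" "1 \<le> m'"
    and eq': "\<forall>l\<in>{1..n}. Jvec lam k m l = Jvec lam k' m' l" for k k' m m'
  proof -
    have "m = m'" using eq' that(1,3) by (metis Jvec_above Jvec_self less_imp_le)
    moreover have "Jvec lam k' m' k < m'" using Jvec_below_lt[OF mono that(2,3,1,4)] .
    moreover have "Jvec lam k m k = Jvec lam k' m' k" using eq' that(2) by blast
    ultimately show False by simp
  qed
  then have "i = i'" using i j eq by (metis linorder_neqE_nat)
  moreover have "Jvec lam i j i = Jvec lam i' j' i" using eq i(1) by blast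
  ultimately show ?thesis by simp
qed

lemma Jset_subset_Jset_iff:
  assumes "1 < p" and "mono_on {1..n} lam"
    and "i \<in> {1..n}" and "k \<in> {1..n}" and "j' \<in> {1..lam k}"
  shows "Jset p n lam k j' \<subseteq> Jset p n lam i j \<longleftrightarrow> j' \<le> Jvec lam i j k"
  using Rset_subset_iff[OF assms(1), of n "Jvec lam k j'" lam] Jvec_le_lam[OF assms(2,4)]
    Jvec_le_Jvec_iff[OF assms(2-4)] assms(5)
  unfolding Jset_def by auto

lemma Jset_eq_JsetD:
  assumes p: "1 < p" and mono: "strict_mono_on {1..n} lam"
    and ij: "i \<in> {1..n}" "j \<in> {1..lam i}" and ij': "i' \<in> {1..n}" "j' \<in> {1..lam i'}"
    and eq: "Jset p n lam i j = Jset p n lam i' j'"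
  shows "i = i' \<and> j = j'"
proof -
  have "\<forall>k\<in>{1..n}. Jvec lam i j k \<le> lam k" "\<forall>k\<in>{1..n}. Jvec lam i' j' k \<le> lam k"
    using Jvec_le_lam[OF strict_mono_on_imp_mono_on[OF mono]] ij ij' by auto
  then have le: "\<forall>k\<in>{1..n}. Jvec lam i j k \<le> Jvec lam i' j' k"
    and ge: "\<forall>k\<in>{1..n}. Jvec lam i' j' k \<le> Jvec lam i j k"
    using eq Rset_subset_iff[OF p] unfolding Jset_def by blast+
  have "\<forall>k\<in>{1..n}. Jvec lam i j k = Jvec lam i' j' k"
  proof
    fix k assume "k \<in> {1..n}"
    then have "Jvec lam i j k \<le> Jvec lam i' j' k" "Jvec lam i' j' k \<le> Jvec lam i j k"
      using le ge by blast+
    then show "Jvec lam i j k = Jvec lam i' j' k" by (rule order_antisym)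
  qed
  moreover have "1 \<le> j" "1 \<le> j'" using ij(2) ij'(2) by simp_all
  ultimately show "i = i' \<and> j = j'"
    using Jvec_inj[OF mono ij(1) ij'(1)] by blast
qed

lemma Jset_inj_on:
  assumes "1 < p" and "strict_mono_on {1..n} lam"
  shows "inj_on (\<lambda>(i, j). Jset p n lam i j) (SIGMA i:{1..n}. {1..lam i})"
  using Jset_eq_JsetD[OF assms] by (intro inj_onI) auto

lemma JG_eq_image: "JG p n lam = (\<lambda>(i, j). Jset p n lam i j) ` (SIGMA i:{1..n}. {1..lam i})"
  unfolding JG_def by fast

theorem mainTheorem18:
  fixes p n :: nat and lam :: "nat \<Rightarrow> nat" and i j :: nat
  assumes "prime p" and "p \<noteq> 2"
    and "0 < lam 1"
    and "\<And>k l. k \<in> {1..n} \<Longrightarrow> l \<in> {1..n} \<Longrightarrow> k < l \<Longrightarrow> lam k < lam l"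
    and "i \<in> {1..n}" and "j \<in> {1..lam i}"
  shows "card {X \<in> JG p n lam. X \<subseteq> Jset p n lam i j} = (\<Sum>k=1..n. Jvec lam i j k)"
proof -
  have p: "1 < p" using assms(1) prime_gt_1_nat by blast
  have smono: "strict_mono_on {1..n} lam" using assms(4) by (rule strict_mono_onI)
  note mono = strict_mono_on_imp_mono_on[OF smono]
  define J where "J = (\<lambda>(i', j'). Jset p n lam i' j')"
  define S where "S = (SIGMA k:{1..n}. {1..Jvec lam i j k})"
  have S_sub: "S \<subseteq> (SIGMA k:{1..n}. {1..lam k})"
    using Jvec_le_lam[OF mono assms(5)] assms(6) unfolding S_def by fastforce
  have "{x \<in> (SIGMA k:{1..n}. {1..lam k}). J x \<subseteq> Jset p n lam i j} = S"
    using S_sub Jset_subset_Jset_iff[OF p mono assms(5)] unfolding S_def J_def by fastforce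
  then have "{X \<in> JG p n lam. X \<subseteq> Jset p n lam i j} = J ` S"
    unfolding JG_eq_image J_def[symmetric] by blast
  moreover have "inj_on J S"
    using inj_on_subset[OF Jset_inj_on[OF p smono] S_sub] unfolding J_def .
  ultimately show ?thesis by (simp add: card_image S_def)
qed

end
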